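(* Let $K\subset\mathbb{R}^2$ be a centrally symmetric convex body of area $1$. Then for every $r$ with $0<r\le 1/2$, $K$ has an inscribed rectangle of area $r$.
   Context: A convex body is a compact convex set with nonempty interior. A polygon is inscribed in $K$ if all its vertices lie on the boundary $\partial K$. *)

theory Defs
  imports "HOL-Analysis.Analysis"
begin

definition convex_body :: "(real^2) set \<Rightarrow> bool" where
  "convex_body K \<longleftrightarrow> compact K \<and> convex K \<and> interior K \<noteq> {}"

definition centrally_symmetric :: "(real^2) set \<Rightarrow> bool" where
  "centrally_symmetric K \<longleftrightarrow> (\<exists>c. \<forall>x\<in>K. 2 *\<^sub>R c - x \<in> K)"

definition is_rectangle :: "real^2 \<Rightarrow> real^2 \<Rightarrow> real^2 \<Rightarrow> real^2 \<Rightarrow> bool" where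
  "is_rectangle a b c d \<longleftrightarrow> (b - a) \<bullet> (d - a) = 0 \<and> c = b + d - a"

definition rect_area :: "real^2 \<Rightarrow> real^2 \<Rightarrow> real^2 \<Rightarrow> real" where
  "rect_area a b d = norm (b - a) * norm (d - a)"

definition has_inscribed_rectangle_of_area :: "(real^2) set \<Rightarrow> real \<Rightarrow> bool" where
  "has_inscribed_rectangle_of_area K r \<longleftrightarrow>
     (\<exists>a b c d. is_rectangle a b c d \<and> rect_area a b d = r \<and>
        a \<in> frontier K \<and> b \<in> frontier K \<and> c \<in> frontier K \<and> d \<in> frontier K)"

end

theory Submission
  imports Defs
begin

text \<open>Centre \<open>K\<close> at the origin and let \<open>radial t\<close> be its radius in direction \<open>dir t\<close>. A
  supporting line at \<open>radial t *\<^sub>R dir t\<close> together with central symmetry traps \<open>K\<close> in a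
  parallelogram of area \<open>4 * radial t * w\<close>, where \<open>w\<close> is the half-width of \<open>K\<close> perpendicular to
  \<open>dir t\<close>; hence \<open>w \<ge> 1 / (4 * radial t)\<close>. So for \<open>r < 1/2\<close> the line parallel to \<open>dir t\<close> at
  distance \<open>r / (2 * radial t)\<close> from the centre crosses the interior of \<open>K\<close>, and its boundary point
  \<open>b t\<close> in direction \<open>dir t\<close> moves continuously with \<open>t\<close>. Comparing a direction of maximal with
  one of minimal radius, the intermediate value theorem gives \<open>t\<close> with \<open>norm (b t) = radial t\<close>.
  Then \<open>\<plusminus>radial t *\<^sub>R dir t\<close> and \<open>\<plusminus>b t\<close> lie on the boundary and form a rectangle of area
  \<open>2 * radial t * r / (2 * radial t) = r\<close>. The case \<open>r = 1/2\<close> follows by compactness.\<close>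

text \<open>Only meaningful when \<open>K\<close> is bounded and the ray meets \<open>K\<close>; otherwise the \<open>Sup\<close> is junk.\<close>
definition ray_exit :: "'a::euclidean_space set \<Rightarrow> 'a \<Rightarrow> 'a \<Rightarrow> real" where
  "ray_exit K p v = Sup {l. p + l *\<^sub>R v \<in> K}"

lemma bdd_above_ray_params:
  fixes K :: "'a::euclidean_space set"
  assumes "bounded K" "v \<noteq> 0"
  shows "bdd_above {l. p + l *\<^sub>R v \<in> K}"
proof -
  obtain B where B: "\<And>x. x \<in> K \<Longrightarrow> norm x \<le> B" using assms(1) bounded_iff by blast
  show ?thesis
  proof (rule bdd_aboveI)
    fix l assume "l \<in> {l. p + l *\<^sub>R v \<in> K}"
    then have "norm (p + l *\<^sub>R v) \<le> B" using B by simp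
    moreover have "\<bar>l\<bar> * norm v \<le> norm (p + l *\<^sub>R v) + norm p"
      using norm_triangle_ineq4[of "p + l *\<^sub>R v" p] by simp
    ultimately have "\<bar>l\<bar> * norm v \<le> B + norm p" by linarith
    then have "\<bar>l\<bar> \<le> (B + norm p) / norm v" using assms(2) by (simp add: pos_le_divide_eq)
    then show "l \<le> (B + norm p) / norm v" by linarith
  qed
qed

lemma ray_exit_upper:
  fixes K :: "'a::euclidean_space set"
  assumes "bounded K" "v \<noteq> 0" "p + l *\<^sub>R v \<in> K"
  shows "l \<le> ray_exit K p v"
  unfolding ray_exit_def using cSup_upper[OF _ bdd_above_ray_params[OF assms(1,2)]] assms(3)
  by blast

lemma ray_exit_in:
  fixes K :: "'a::euclidean_space set"
  assumes "compact K" "v \<noteq> 0" "p + l *\<^sub>R v \<in> K"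
  shows "p + ray_exit K p v *\<^sub>R v \<in> K"
proof -
  have "closed ((\<lambda>l. p + l *\<^sub>R v) -` K)"
    using continuous_closed_vimage[OF compact_imp_closed[OF assms(1)], of "\<lambda>l. p + l *\<^sub>R v"]
    by (simp add: continuous_intros)
  then have "closed {l. p + l *\<^sub>R v \<in> K}" by (simp add: vimage_def)
  moreover have "bdd_above {l. p + l *\<^sub>R v \<in> K}"
    using bdd_above_ray_params[OF compact_imp_bounded[OF assms(1)] assms(2)] .
  moreover have "{l. p + l *\<^sub>R v \<in> K} \<noteq> {}" using assms(3) by auto
  ultimately have "Sup {l. p + l *\<^sub>R v \<in> K} \<in> {l. p + l *\<^sub>R v \<in> K}"
    by (intro closed_contains_Sup)
  then show ?thesis unfolding ray_exit_def by simp
qed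

lemma ray_exit_in_frontier:
  fixes K :: "'a::euclidean_space set"
  assumes K: "compact K" and v: "v \<noteq> 0" and l: "p + l *\<^sub>R v \<in> K"
  shows "p + ray_exit K p v *\<^sub>R v \<in> frontier K"
proof -
  let ?g = "ray_exit K p v"
  have "p + ?g *\<^sub>R v \<notin> interior K"
  proof
    assume "p + ?g *\<^sub>R v \<in> interior K"
    then obtain d where d: "d > 0" "ball (p + ?g *\<^sub>R v) d \<subseteq> K"
      using mem_interior by blast
    let ?l = "?g + d / (2 * norm v)"
    have "dist (p + ?g *\<^sub>R v) (p + ?l *\<^sub>R v) = d/2"
      using v d by (simp add: dist_norm algebra_simps)
    then have "p + ?l *\<^sub>R v \<in> K" using d by auto
    then have "?l \<le> ?g" using ray_exit_upper[OF compact_imp_bounded[OF K] v] by blast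
    then show False using d v by (simp add: field_simps)
  qed
  then show ?thesis
    using ray_exit_in[OF assms] K by (simp add: frontier_def compact_imp_closed)
qed

lemma ray_point_in_interior:
  fixes K :: "'a::euclidean_space set"
  assumes K: "convex K" "bounded K" and v: "v \<noteq> 0"
    and lz: "p + lz *\<^sub>R v \<in> interior K" and g: "lz \<le> g" "g < ray_exit K p v"
  shows "p + g *\<^sub>R v \<in> interior K"
proof (cases "lz = g")
  case False
  obtain l' where l': "p + l' *\<^sub>R v \<in> K" "g < l'"
    using g(2) less_cSup_iff[OF _ bdd_above_ray_params[OF K(2) v]] lz interior_subset
    unfolding ray_exit_def by blast
  define u where "u = (l' - g) / (l' - lz)"
  have u: "0 < u" "u \<le> 1" using False g l' by (auto simp: u_def field_simps)
  have "(p + l' *\<^sub>R v) - u *\<^sub>R ((p + l' *\<^sub>R v) - (p + lz *\<^sub>R v)) \<in> interior K"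
    using mem_interior_closure_convex_shrink[OF K(1) lz _ u] l' closure_subset by blast
  moreover have "(p + l' *\<^sub>R v) - u *\<^sub>R ((p + l' *\<^sub>R v) - (p + lz *\<^sub>R v))
      = p + (l' - u * (l' - lz)) *\<^sub>R v"
    by (simp add: algebra_simps)
  moreover have "l' - u * (l' - lz) = g" using False g l' by (simp add: u_def field_simps)
  ultimately show ?thesis by metis
qed (use lz in simp)

lemma ray_exit_le:
  fixes K :: "'a::euclidean_space set"
  assumes K: "convex K" and l1: "p + l1 *\<^sub>R v \<in> K" "l1 \<le> mu" and mu: "p + mu *\<^sub>R v \<notin> K"
  shows "ray_exit K p v \<le> mu"
  unfolding ray_exit_def
proof (rule cSup_least)
  fix l assume l: "l \<in> {l. p + l *\<^sub>R v \<in> K}"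
  show "l \<le> mu"
  proof (rule ccontr)
    assume "\<not> l \<le> mu"
    define u where "u = (mu - l1) / (l - l1)"
    have u: "0 \<le> u" "u \<le> 1" using l1 \<open>\<not> l \<le> mu\<close> by (auto simp: u_def field_simps)
    have "(1 - u) *\<^sub>R (p + l1 *\<^sub>R v) + u *\<^sub>R (p + l *\<^sub>R v) \<in> K"
      using convexD_alt[OF K l1(1), of "p + l *\<^sub>R v" u] l u by simp
    moreover have "(1 - u) *\<^sub>R (p + l1 *\<^sub>R v) + u *\<^sub>R (p + l *\<^sub>R v)
        = p + ((1 - u) * l1 + u * l) *\<^sub>R v"
      by (simp add: algebra_simps)
    moreover have "u * (l - l1) = mu - l1" using l1 \<open>\<not> l \<le> mu\<close> by (simp add: u_def)
    then have "(1 - u) * l1 + u * l = mu" by (simp add: algebra_simps)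
    ultimately show False using mu by simp
  qed
qed (use l1 in blast)

lemma isCont_ray_exit:
  fixes K :: "'a::euclidean_space set" and P V :: "real \<Rightarrow> 'a"
  assumes K: "convex K" "compact K" and P: "isCont P t0" and V: "isCont V t0"
    and v: "V t0 \<noteq> 0" and lz: "P t0 + lz *\<^sub>R V t0 \<in> interior K"
  shows "isCont (\<lambda>t. ray_exit K (P t) (V t)) t0"
  unfolding isCont_def
proof (rule tendstoI)
  fix e :: real assume e: "e > 0"
  let ?g = "ray_exit K (P t0) (V t0)"
  have bdd: "bounded K" using K(2) by (rule compact_imp_bounded)
  have lz_le: "lz \<le> ?g" using ray_exit_upper[OF bdd v subsetD[OF interior_subset lz]] .
  define mu where "mu = ?g + e/2"
  define l1 where "l1 = max lz (?g - e/2)"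
  have out: "P t0 + mu *\<^sub>R V t0 \<notin> K"
    using ray_exit_upper[OF bdd v, of "P t0" mu] e by (auto simp: mu_def)
  have "l1 = lz \<or> lz \<le> l1 \<and> l1 < ?g" using e by (auto simp: l1_def)
  then have "P t0 + l1 *\<^sub>R V t0 \<in> interior K"
    using ray_point_in_interior[OF K(1) bdd v lz, of l1] lz by auto
  moreover have "isCont (\<lambda>t. P t + l1 *\<^sub>R V t) t0" by (intro continuous_intros P V)
  ultimately have "eventually (\<lambda>t. P t + l1 *\<^sub>R V t \<in> interior K) (at t0)"
    using topological_tendstoD[OF _ open_interior] by (simp add: isCont_def)
  moreover have "isCont (\<lambda>t. P t + mu *\<^sub>R V t) t0" by (intro continuous_intros P V)
  then have "eventually (\<lambda>t. P t + mu *\<^sub>R V t \<in> - K) (at t0)"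
    using topological_tendstoD[OF _ open_Compl[OF compact_imp_closed[OF K(2)]]] out
    unfolding isCont_def by blast
  moreover have "eventually (\<lambda>t. V t \<noteq> 0) (at t0)"
    using tendsto_imp_eventually_ne[OF V[unfolded isCont_def] v] .
  ultimately show "eventually (\<lambda>t. dist (ray_exit K (P t) (V t)) ?g < e) (at t0)"
  proof eventually_elim
    case (elim t)
    then have in1: "P t + l1 *\<^sub>R V t \<in> K" using interior_subset by blast
    have "l1 \<le> ray_exit K (P t) (V t)" using ray_exit_upper[OF bdd elim(3) in1] .
    moreover have "ray_exit K (P t) (V t) \<le> mu"
      using ray_exit_le[OF K(1) in1, of mu] elim(2) e lz_le by (simp add: mu_def l1_def)
    ultimately show ?case using e by (simp add: mu_def l1_def dist_real_def abs_if)
  qed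
qed

definition dir :: "real \<Rightarrow> real^2" where
  "dir t = vector [cos t, sin t]"

definition dir_perp :: "real \<Rightarrow> real^2" where
  "dir_perp t = vector [- sin t, cos t]"

lemma inner_vec2: "(x::real^2) \<bullet> y = x$1 * y$1 + x$2 * y$2"
  by (simp add: inner_vec_def sum_2)

lemma dir_nth [simp]: "dir t $ 1 = cos t" "dir t $ 2 = sin t"
  by (simp_all add: dir_def)

lemma dir_perp_nth [simp]: "dir_perp t $ 1 = - sin t" "dir_perp t $ 2 = cos t"
  by (simp_all add: dir_perp_def)

lemma inner_dir [simp]:
  "dir t \<bullet> dir t = 1" "dir_perp t \<bullet> dir_perp t = 1" "dir t \<bullet> dir_perp t = 0" "dir_perp t \<bullet> dir t = 0"
  by (simp_all add: inner_vec2 power2_eq_square[symmetric])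

lemma norm_dir [simp]: "norm (dir t) = 1" "norm (dir_perp t) = 1"
  by (simp_all add: norm_eq_sqrt_inner)

lemma dir_nonzero [simp]: "dir t \<noteq> 0"
  using norm_dir(1)[of t] by (metis norm_zero zero_neq_one)

lemma vec2_eq_dir_coords: "(z::real^2) = (z \<bullet> dir t) *\<^sub>R dir t + (z \<bullet> dir_perp t) *\<^sub>R dir_perp t"
proof -
  have cs: "cos t * (cos t * c) + sin t * (sin t * c) = c" "sin t * (sin t * c) + cos t * (cos t * c) = c"
    for c
  proof -
    have "cos t * (cos t * c) + sin t * (sin t * c) = (cos t * cos t + sin t * sin t) * c"
      by (simp only: distrib_right mult.assoc)
    then show "cos t * (cos t * c) + sin t * (sin t * c) = c"
      by (simp only: sin_cos_squared_add3 mult_1)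
    then show "sin t * (sin t * c) + cos t * (cos t * c) = c" by (simp only: add.commute)
  qed
  show ?thesis by (simp add: vec_eq_iff forall_2 inner_vec2 algebra_simps cs)
qed

lemma dir_eq: "dir t = cos t *\<^sub>R vector [1,0] + sin t *\<^sub>R vector [0,1]"
  by (simp add: vec_eq_iff forall_2)

lemma dir_perp_eq: "dir_perp t = (- sin t) *\<^sub>R vector [1,0] + cos t *\<^sub>R vector [0,1]"
  by (simp add: vec_eq_iff forall_2)

lemma isCont_dir [continuous_intros]: "isCont dir t"
  unfolding dir_eq[abs_def] by (intro continuous_intros)

lemma isCont_dir_perp [continuous_intros]: "isCont dir_perp t"
  unfolding dir_perp_eq[abs_def] by (intro continuous_intros)

lemma vec2_polar:
  fixes y :: "real^2"
  assumes "y \<noteq> 0"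
  obtains t where "y = norm y *\<^sub>R dir t"
proof -
  have n: "norm y > 0" using assms by simp
  have "(norm y)\<^sup>2 = y$1 * y$1 + y$2 * y$2" by (simp add: power2_norm_eq_inner inner_vec2)
  moreover have "norm y * norm y \<noteq> 0" using n by simp
  ultimately have "(y$1 / norm y)\<^sup>2 + (y$2 / norm y)\<^sup>2 = 1"
    by (simp add: power_divide power2_eq_square add_divide_distrib[symmetric])
  then obtain t where t: "y$1 / norm y = cos t" "y$2 / norm y = sin t"
    by (rule sincos_total_2pi) blast
  have "y$1 = norm y * cos t" "y$2 = norm y * sin t"
    using t n by (simp_all add: divide_eq_eq mult.commute)
  then have "y = norm y *\<^sub>R dir t" by (simp add: vec_eq_iff forall_2)
  then show ?thesis by (rule that)
qed

lemma measure_cbox_vec2: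
  assumes "0 \<le> h" "0 \<le> A"
  shows "measure lebesgue (cbox (vector [-h, -A]) (vector [h, A]) :: (real^2) set) = (2*h) * (2*A)"
proof -
  have ne: "cbox (vector [-h, -A]) (vector [h, A]) \<noteq> ({} :: (real^2) set)"
    using assms by (auto simp: interval_ne_empty_cart forall_2)
  have "measure lebesgue (cbox (vector [-h, -A]) (vector [h, A]) :: (real^2) set)
      = measure lborel (cbox (vector [-h, -A]) (vector [h, A]) :: (real^2) set)"
    by (simp add: measure_completion)
  also have "\<dots> = (2*h) * (2*A)" using content_cbox_cart[OF ne]
    by (simp add: UNIV_2 prod_2[symmetric])
  finally show ?thesis .
qed

text \<open>The parallelogram is the image of the box \<open>[-h, h] \<times> [-A, A]\<close> under the linear map \<open>S\<close> below,
  whose determinant is \<open>-1 / (dir t \<bullet> m)\<close>.\<close>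
lemma measure_le_parallelogram:
  fixes K :: "(real^2) set" and m :: "real^2"
  assumes K: "K \<in> lmeasurable" and h: "\<And>x. x \<in> K \<Longrightarrow> \<bar>x \<bullet> dir_perp t\<bar> \<le> h"
    and A: "\<And>x. x \<in> K \<Longrightarrow> \<bar>x \<bullet> m\<bar> \<le> A" and m: "dir t \<bullet> m \<noteq> 0" and "0 \<le> h" "0 \<le> A"
  shows "measure lebesgue K \<le> 4 * h * A / \<bar>dir t \<bullet> m\<bar>"
proof -
  define mu where "mu = dir t \<bullet> m"
  define nu where "nu = dir_perp t \<bullet> m"
  define w where "w = dir_perp t - (nu / mu) *\<^sub>R dir t"
  define S where "S p = (p$2 / mu) *\<^sub>R dir t + (p$1) *\<^sub>R w" for p :: "real^2"
  have linS: "linear S"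
    by (rule linearI) (simp_all add: S_def add_divide_distrib scaleR_add_left scaleR_add_right)
  define B where "B = (cbox (vector [-h, -A]) (vector [h, A]) :: (real^2) set)"
  have "K \<subseteq> S ` B"
  proof
    fix x assume x: "x \<in> K"
    define p where "p = (vector [x \<bullet> dir_perp t, x \<bullet> m] :: real^2)"
    have pB: "p \<in> B" using h[OF x] A[OF x]
      by (simp add: B_def p_def mem_box_cart forall_2 abs_le_iff)
    have "x \<bullet> m = (x \<bullet> dir t) * mu + (x \<bullet> dir_perp t) * nu"
      using arg_cong[OF vec2_eq_dir_coords[of x t], of "\<lambda>z. z \<bullet> m"]
      by (simp add: inner_add_left mu_def nu_def)
    then have "(x \<bullet> m) / mu - (x \<bullet> dir_perp t) * (nu / mu) = x \<bullet> dir t"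
      using m by (simp add: mu_def field_simps)
    moreover have "S p = ((x \<bullet> m) / mu - (x \<bullet> dir_perp t) * (nu / mu)) *\<^sub>R dir t
        + (x \<bullet> dir_perp t) *\<^sub>R dir_perp t"
      by (simp add: S_def p_def w_def algebra_simps)
    ultimately have "S p = x" using vec2_eq_dir_coords[of x t] by simp
    then show "x \<in> S ` B" using pB by blast
  qed
  moreover have Bm: "B \<in> lmeasurable" by (simp add: B_def)
  ultimately have "measure lebesgue K \<le> measure lebesgue (S ` B)"
    by (intro measure_mono_fmeasurable) (auto intro: fmeasurableD K measurable_linear_image[OF linS])
  also have "\<dots> = \<bar>det (matrix S)\<bar> * measure lebesgue B"
    by (rule measure_linear_image[OF linS Bm])
  also have "det (matrix S) = - 1 / mu"
  proof -
    have "det (matrix S) = (w$1 * sin t - cos t * w$2) / mu"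
      by (simp add: det_2 matrix_def S_def axis_def diff_divide_distrib)
    also have "w$1 * sin t - cos t * w$2 = - 1"
      by (simp add: w_def algebra_simps)
    finally show ?thesis .
  qed
  also have "measure lebesgue B = (2*h) * (2*A)"
    unfolding B_def by (rule measure_cbox_vec2) fact+
  finally show ?thesis by (simp add: mu_def)
qed

lemma supporting_functional_at_frontier:
  fixes K :: "'a::euclidean_space set"
  assumes K: "convex K" "0 \<in> interior K" and u: "u \<in> frontier K"
  obtains m where "\<And>y. y \<in> K \<Longrightarrow> y \<bullet> m \<le> u \<bullet> m" and "0 < u \<bullet> m"
proof -
  have ri: "rel_interior K = interior K" using K(2) rel_interior_nonempty_interior by blast
  obtain a where a: "a \<noteq> 0" "\<And>y. y \<in> closure K \<Longrightarrow> a \<bullet> u \<le> a \<bullet> y"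
  proof (rule supporting_hyperplane_relative_frontier[OF K(1), of u])
    show "u \<in> closure K" "u \<notin> rel_interior K"
      using u ri by (simp_all add: frontier_def)
  qed blast
  define m where "m = - a"
  have sup: "y \<bullet> m \<le> u \<bullet> m" if "y \<in> K" for y
    using a(2)[of y] that closure_subset by (auto simp: m_def inner_commute)
  obtain d where d: "d > 0" "ball 0 d \<subseteq> K" using K(2) mem_interior by blast
  have mn: "norm m > 0" using a(1) m_def by simp
  define y where "y = (d / (2 * norm m)) *\<^sub>R m"
  have "norm y = d/2" using mn d by (simp add: y_def)
  then have "y \<in> ball 0 d" using d by simp
  then have "y \<bullet> m \<le> u \<bullet> m" using sup d by blast
  moreover have "y \<bullet> m = d/2 * norm m"
    using mn by (simp add: y_def power2_norm_eq_inner[symmetric] power2_eq_square)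
  moreover have "0 < d/2 * norm m" using d mn by simp
  ultimately have "0 < u \<bullet> m" by linarith
  with sup show ?thesis by (rule that)
qed

lemma sides_mult_eq_cross:
  fixes a b :: "real^2"
  assumes "norm a = norm b"
  shows "norm (b - a) * norm (- b - a) = 2 * \<bar>a$1 * b$2 - a$2 * b$1\<bar>"
proof -
  define N where "N = a$1 * a$1 + a$2 * a$2"
  define d where "d = a$1 * b$1 + a$2 * b$2"
  define D where "D = a$1 * b$2 - a$2 * b$1"
  have "(norm a)\<^sup>2 = N" "(norm b)\<^sup>2 = b$1 * b$1 + b$2 * b$2"
    by (simp_all add: power2_norm_eq_inner inner_vec2 N_def)
  then have b: "b$1 * b$1 + b$2 * b$2 = N" using assms by metis
  have X: "(norm (b - a))\<^sup>2 = 2*N - 2*d" and Y: "(norm (- b - a))\<^sup>2 = 2*N + 2*d"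
    using b by (simp_all add: power2_norm_eq_inner inner_vec2 algebra_simps d_def N_def)
  have "N * N = d * d + D * D"
  proof -
    have "N * N = N * (b$1 * b$1 + b$2 * b$2)" using b by simp
    also have "\<dots> = d * d + D * D" by (simp add: N_def d_def D_def algebra_simps)
    finally show ?thesis .
  qed
  have "(norm (b - a) * norm (- b - a))\<^sup>2 = (2*N - 2*d) * (2*N + 2*d)"
    by (simp add: power_mult_distrib X Y)
  also have "\<dots> = (2 * \<bar>D\<bar>)\<^sup>2"
    using \<open>N * N = d * d + D * D\<close> by (simp add: algebra_simps power2_eq_square)
  finally have "(norm (b - a) * norm (- b - a))\<^sup>2 = (2 * \<bar>D\<bar>)\<^sup>2" .
  then show ?thesis unfolding D_def
    by (rule power2_eq_iff_nonneg[THEN iffD1, rotated 2]) simp_all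
qed

locale symmetric_convex_body =
  fixes K :: "(real^2) set"
  assumes convex: "convex K" and compact: "compact K" and zero_in_interior: "0 \<in> interior K"
    and neg_mem: "\<And>x. x \<in> K \<Longrightarrow> - x \<in> K"
begin

lemma bounded: "bounded K"
  using compact by (rule compact_imp_bounded)

lemma frontier_subset: "frontier K \<subseteq> K"
  using compact by (simp add: compact_imp_closed frontier_subset_closed)

definition radial :: "real \<Rightarrow> real" where
  "radial t = ray_exit K 0 (dir t)"

lemma radial_in_frontier: "radial t *\<^sub>R dir t \<in> frontier K"
  using ray_exit_in_frontier[OF compact dir_nonzero, of 0 0] zero_in_interior interior_subset
  unfolding radial_def by auto

lemma le_radial: "s *\<^sub>R dir t \<in> K \<Longrightarrow> s \<le> radial t"
  using ray_exit_upper[OF bounded dir_nonzero, of 0] unfolding radial_def by simp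

lemma radial_pos: "0 < radial t"
proof -
  have "0 \<le> radial t" using le_radial[of 0] zero_in_interior interior_subset by auto
  moreover have "radial t *\<^sub>R dir t \<noteq> 0"
    using radial_in_frontier[of t] zero_in_interior by (auto simp: frontier_def)
  ultimately show ?thesis by force
qed

lemma isCont_radial: "isCont radial t"
  unfolding radial_def[abs_def]
  using isCont_ray_exit[OF convex compact _ isCont_dir dir_nonzero, where P="\<lambda>t. 0" and lz=0]
    zero_in_interior by simp

lemma radial_eq:
  assumes y: "s *\<^sub>R dir t \<in> frontier K" "0 < s"
  shows "radial t = s"
proof -
  have "s \<le> radial t" using le_radial y(1) frontier_subset by blast
  moreover have "\<not> s < radial t"
  proof
    assume "s < radial t"
    define u where "u = 1 - s / radial t"
    have u: "0 < u" "u \<le> 1" using \<open>s < radial t\<close> y(2) radial_pos[of t] by (auto simp: u_def field_simps)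
    have "radial t *\<^sub>R dir t - u *\<^sub>R (radial t *\<^sub>R dir t - 0) \<in> interior K"
      using mem_interior_closure_convex_shrink[OF convex zero_in_interior _ u]
        radial_in_frontier[of t] frontier_subset closure_subset by blast
    moreover have "radial t *\<^sub>R dir t - u *\<^sub>R (radial t *\<^sub>R dir t - 0) = s *\<^sub>R dir t"
      using radial_pos[of t] by (simp add: u_def algebra_simps)
    ultimately show False using y(1) by (auto simp: frontier_def)
  qed
  ultimately show ?thesis by simp
qed

lemma neg_frontier: "y \<in> frontier K \<Longrightarrow> - y \<in> frontier K"
proof -
  assume y: "y \<in> frontier K"
  have "uminus ` K = K"
    using neg_mem by (auto intro: image_eqI[where x="- _"])
  then have int: "uminus ` interior K = interior K" by (metis interior_negations)
  have "- y \<notin> interior K"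
  proof
    assume "- y \<in> interior K"
    then have "y \<in> interior K" using int by (metis image_eqI minus_minus)
    then show False using y by (simp add: frontier_def)
  qed
  then show ?thesis
    using y frontier_subset neg_mem compact by (auto simp: frontier_def compact_imp_closed)
qed

lemma measure_le_radial_mult_width:
  assumes h: "\<And>x. x \<in> K \<Longrightarrow> x \<bullet> dir_perp t \<le> h"
  shows "measure lebesgue K \<le> 4 * radial t * h"
proof -
  obtain m where m: "\<And>y. y \<in> K \<Longrightarrow> y \<bullet> m \<le> radial t *\<^sub>R dir t \<bullet> m" "0 < radial t *\<^sub>R dir t \<bullet> m"
    using supporting_functional_at_frontier[OF convex zero_in_interior radial_in_frontier] by blast
  define A where "A = radial t *\<^sub>R dir t \<bullet> m"
  have mu: "0 < dir t \<bullet> m" using m(2) radial_pos[of t] by (simp add: zero_less_mult_iff)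
  have "measure lebesgue K \<le> 4 * h * A / \<bar>dir t \<bullet> m\<bar>"
  proof (rule measure_le_parallelogram)
    show "K \<in> lmeasurable" using compact by (rule lmeasurable_compact)
    show "\<bar>x \<bullet> dir_perp t\<bar> \<le> h" if "x \<in> K" for x
      using h[OF that] h[OF neg_mem[OF that]] by simp
    show "\<bar>x \<bullet> m\<bar> \<le> A" if "x \<in> K" for x
      using m(1)[OF that] m(1)[OF neg_mem[OF that]] by (simp add: A_def)
    show "0 \<le> h" using h[of 0] zero_in_interior interior_subset by auto
  qed (use mu m(2) A_def in simp_all)
  also have "\<dots> = 4 * radial t * h" using mu by (simp add: A_def)
  finally show ?thesis .
qed

lemma line_meets_interior:
  assumes "4 * radial t * c < measure lebesgue K" "0 \<le> c"
  obtains l where "c *\<^sub>R dir_perp t + l *\<^sub>R dir t \<in> interior K"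
proof -
  obtain x where x: "x \<in> K" "c < x \<bullet> dir_perp t"
    using measure_le_radial_mult_width[of t c] assms(1) by force
  define e where "e = 1 - c / (x \<bullet> dir_perp t)"
  have e: "0 < e" "e \<le> 1" using x assms(2) by (auto simp: e_def field_simps)
  define y where "y = x - e *\<^sub>R (x - 0)"
  have "y \<in> interior K" unfolding y_def
    using mem_interior_closure_convex_shrink[OF convex zero_in_interior _ e] x closure_subset by blast
  moreover have "y \<bullet> dir_perp t = c"
    using x assms(2) by (simp add: y_def e_def algebra_simps inner_diff_left)
  then have "y = c *\<^sub>R dir_perp t + (y \<bullet> dir t) *\<^sub>R dir t"
    using vec2_eq_dir_coords[of y t] by (simp add: add.commute)
  ultimately show ?thesis by (metis that)
qed

lemma exists_radial_max:
  obtains t where "\<And>y. y \<in> K \<Longrightarrow> norm y \<le> radial t"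
proof -
  obtain yM where yM: "yM \<in> K" "\<And>y. y \<in> K \<Longrightarrow> norm y \<le> norm yM"
    using continuous_attains_sup[OF compact, of norm] zero_in_interior interior_subset
    by (metis continuous_on_norm_id empty_iff subsetD)
  have "radial 0 *\<^sub>R dir 0 \<in> K" using radial_in_frontier frontier_subset by blast
  then have "radial 0 \<le> norm yM" using yM(2) radial_pos[of 0] by fastforce
  then have "yM \<noteq> 0" using radial_pos[of 0] by auto
  then obtain t where t: "yM = norm yM *\<^sub>R dir t" by (rule vec2_polar)
  have "norm yM \<le> radial t" using le_radial yM(1) t by metis
  with yM(2) show ?thesis by (meson order_trans that)
qed

lemma exists_radial_min:
  obtains t where "\<And>y. y \<in> frontier K \<Longrightarrow> radial t \<le> norm y"
proof -
  obtain ym where ym: "ym \<in> frontier K" "\<And>y. y \<in> frontier K \<Longrightarrow> norm ym \<le> norm y"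
    using continuous_attains_inf[OF compact_frontier[OF compact], of norm] radial_in_frontier
    by (metis continuous_on_norm_id empty_iff)
  have "ym \<noteq> 0" using ym(1) zero_in_interior by (auto simp: frontier_def)
  then obtain t where t: "ym = norm ym *\<^sub>R dir t" by (rule vec2_polar)
  have "radial t = norm ym" using radial_eq ym(1) t \<open>ym \<noteq> 0\<close> by (metis zero_less_norm_iff)
  with ym(2) show ?thesis by (metis that)
qed

lemma exists_norm_eq_radial:
  assumes b: "\<And>t. isCont b t" "\<And>t. b t \<in> frontier K"
  obtains t where "norm (b t) = radial t"
proof -
  define f where "f t = norm (b t) - radial t" for t
  have cont: "continuous_on S f" for S
    unfolding f_def by (intro continuous_at_imp_continuous_on ballI continuous_intros b isCont_radial)
  obtain tM where "f tM \<le> 0"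
    using exists_radial_max b(2) frontier_subset by (metis f_def diff_le_0_iff_le subsetD)
  moreover obtain tm where "0 \<le> f tm"
    using exists_radial_min b(2) by (metis f_def diff_ge_0_iff_ge)
  ultimately obtain t where "f t = 0"
    using IVT'[of f tM 0 tm] IVT2'[of f tM 0 tm] cont by (cases "tM \<le> tm") force+
  then show ?thesis by (simp add: f_def that)
qed

lemma exists_frontier_rectangle_lt:
  assumes meas: "measure lebesgue K = 1" and r: "0 < r" "r < 1/2"
  obtains a b where "a \<in> frontier K" "b \<in> frontier K" "norm a = norm b"
    "norm (b - a) * norm (- b - a) = r"
proof -
  define c where "c t = r / (2 * radial t)" for t
  have c_pos: "0 < c t" for t using r radial_pos[of t] by (simp add: c_def)
  have line: "\<exists>l. c t *\<^sub>R dir_perp t + l *\<^sub>R dir t \<in> interior K" for t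
  proof (rule line_meets_interior)
    show "4 * radial t * c t < measure lebesgue K"
      using radial_pos[of t] meas r by (simp add: c_def)
  qed (use c_pos[of t] in auto)
  define b where "b t = c t *\<^sub>R dir_perp t + ray_exit K (c t *\<^sub>R dir_perp t) (dir t) *\<^sub>R dir t" for t
  have b_frontier: "b t \<in> frontier K" for t
    using line[of t] ray_exit_in_frontier[OF compact dir_nonzero] interior_subset
    unfolding b_def by blast
  have isCont_c: "isCont c t" for t
    unfolding c_def[abs_def] using radial_pos[of t] by (intro continuous_intros isCont_radial) simp
  have "isCont b t" for t
  proof -
    obtain lz where "c t *\<^sub>R dir_perp t + lz *\<^sub>R dir t \<in> interior K" using line by blast
    then have "isCont (\<lambda>t. ray_exit K (c t *\<^sub>R dir_perp t) (dir t)) t"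
      by (intro isCont_ray_exit[OF convex compact _ isCont_dir dir_nonzero])
        (intro continuous_intros isCont_c)
    then show ?thesis unfolding b_def[abs_def] by (intro continuous_intros isCont_c)
  qed
  then obtain t where t: "norm (b t) = radial t"
    using exists_norm_eq_radial b_frontier by blast
  define a where "a = radial t *\<^sub>R dir t"
  have "norm a = norm (b t)" using t radial_pos[of t] by (simp add: a_def)
  moreover have "a$1 * b t$2 - a$2 * b t$1 = radial t * (b t \<bullet> dir_perp t)"
    by (simp add: a_def inner_vec2 algebra_simps)
  then have "a$1 * b t$2 - a$2 * b t$1 = radial t * c t" by (simp add: b_def inner_add_left)
  then have "norm (b t - a) * norm (- b t - a) = r"
    using sides_mult_eq_cross[OF \<open>norm a = norm (b t)\<close>] radial_pos[of t] r by (simp add: c_def)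
  ultimately show ?thesis using that radial_in_frontier b_frontier unfolding a_def by blast
qed

text \<open>The area \<open>1/2\<close> is reached as a limit, using compactness of the set of admissible pairs.\<close>
lemma exists_frontier_rectangle:
  assumes meas: "measure lebesgue K = 1" and r: "0 < r" "r \<le> 1/2"
  obtains a b where "a \<in> frontier K" "b \<in> frontier K" "norm a = norm b"
    "norm (b - a) * norm (- b - a) = r"
proof -
  define Q where "Q = (frontier K \<times> frontier K) \<inter> {p. norm (fst p) = norm (snd p)}"
  define area where "area p = norm (snd p - fst p) * norm (- snd p - fst p)" for p :: "(real^2) \<times> (real^2)"
  have "compact Q" unfolding Q_def
    by (intro compact_Int_closed compact_Times compact_frontier compact closed_Collect_eq)
       (intro continuous_intros)+
  then have closed: "closed (area ` Q)" unfolding area_def[abs_def]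
    by (intro compact_imp_closed compact_continuous_image continuous_intros)
  have lt: "r' \<in> area ` Q" if r': "0 < r'" "r' < 1/2" for r'
  proof -
    obtain a b where ab: "a \<in> frontier K" "b \<in> frontier K" "norm a = norm b"
      "norm (b - a) * norm (- b - a) = r'"
      using exists_frontier_rectangle_lt[OF meas r'] .
    then have "(a, b) \<in> Q" "r' = area (a, b)" by (simp_all add: Q_def area_def)
    then show ?thesis by (rule rev_image_eqI)
  qed
  have "r \<in> area ` Q"
  proof (cases "r < 1/2")
    case False
    have "\<exists>y\<in>area ` Q. dist y r < e" if "0 < e" for e
    proof
      show "max (1/4) (1/2 - e/2) \<in> area ` Q" using that by (intro lt) (auto simp: max_def)
      show "dist (max (1/4) (1/2 - e/2)) r < e" using False r that by (simp add: dist_real_def)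
    qed
    then show ?thesis using closed_approachable[OF closed] by blast
  qed (use lt r in simp)
  then obtain p where "p \<in> Q" "r = area p" by blast
  then show ?thesis using that[of "fst p" "snd p"] by (simp add: Q_def area_def mem_Times_iff)
qed
end

lemma zero_in_interior_if_symmetric:
  fixes K :: "'a::euclidean_space set"
  assumes "convex K" and neg: "\<And>x. x \<in> K \<Longrightarrow> - x \<in> K" and "interior K \<noteq> {}"
  shows "0 \<in> interior K"
proof -
  obtain z d where d: "d > 0" "ball z d \<subseteq> K" using assms(3) mem_interior by blast
  have "y \<in> K" if "y \<in> ball 0 d" for y
  proof -
    have "z + y \<in> K" "z - y \<in> K" using d that by (auto simp: dist_norm)
    then have "z + y \<in> K" "- (z - y) \<in> K" using neg by blast+
    then have "(1/2) *\<^sub>R (z + y) + (1/2) *\<^sub>R (- (z - y)) \<in> K"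
      using convexD[OF assms(1)] by simp
    then show "y \<in> K" by (simp add: algebra_simps) (simp flip: scaleR_add_left)
  qed
  then show ?thesis using d(1) mem_interior by blast
qed

lemma symmetric_convex_body_translation:
  assumes "convex_body K" "centrally_symmetric K"
  obtains c where "symmetric_convex_body ((\<lambda>x. x - c) ` K)"
proof -
  obtain c where c: "\<And>x. x \<in> K \<Longrightarrow> 2 *\<^sub>R c - x \<in> K"
    using assms(2) unfolding centrally_symmetric_def by blast
  have K: "compact K" "convex K" "interior K \<noteq> {}"
    using assms(1) unfolding convex_body_def by auto
  let ?K = "(\<lambda>x. x - c) ` K"
  have neg: "- x \<in> ?K" if "x \<in> ?K" for x
  proof -
    from that obtain k where k: "k \<in> K" "x = k - c" by blast
    have "- x = (2 *\<^sub>R c - k) - c" using k(2) by (simp add: algebra_simps scaleR_2)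
    then show ?thesis using c[OF k(1)] by blast
  qed
  have "convex ?K" "compact ?K" "interior ?K \<noteq> {}"
    using K by (simp_all add: convex_translation_subtract compact_translation_subtract
      interior_translation_subtract)
  with neg have "symmetric_convex_body ?K"
    by unfold_locales (simp_all add: zero_in_interior_if_symmetric)
  then show ?thesis by (rule that)
qed

text \<open>Equal diagonals bisecting each other make \<open>c \<plusminus> a\<close>, \<open>c \<plusminus> b\<close> a rectangle.\<close>
lemma has_inscribed_rectangle_of_area_diagonals:
  assumes "c + a \<in> frontier K" "c + b \<in> frontier K" "c - a \<in> frontier K" "c - b \<in> frontier K"
    and "norm a = norm b" and "norm (b - a) * norm (- b - a) = r"
  shows "has_inscribed_rectangle_of_area K r"
  unfolding has_inscribed_rectangle_of_area_def
proof (intro exI conjI)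
  have "(b - a) \<bullet> (- b - a) = (norm a)\<^sup>2 - (norm b)\<^sup>2"
    by (simp add: power2_norm_eq_inner algebra_simps inner_commute)
  then show "is_rectangle (c + a) (c + b) (c - a) (c - b)"
    using assms(5) by (simp add: is_rectangle_def algebra_simps)
  have "c + b - (c + a) = b - a" "c - b - (c + a) = - b - a" by (simp_all add: algebra_simps)
  then show "rect_area (c + a) (c + b) (c - b) = r"
    using assms(6) by (simp only: rect_area_def)
qed (use assms in simp_all)

theorem lemma3p4:
  fixes K :: "(real^2) set" and r :: real
  assumes "convex_body K" and "centrally_symmetric K"
    and "measure lebesgue K = 1"
    and "0 < r" and "r \<le> 1/2"
  shows "has_inscribed_rectangle_of_area K r"
proof -
  obtain c where "symmetric_convex_body ((\<lambda>x. x - c) ` K)" (is "symmetric_convex_body ?K")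
    using symmetric_convex_body_translation[OF assms(1,2)] .
  then interpret symmetric_convex_body ?K .
  have "measure lebesgue ?K = 1" using assms(3) by (simp add: measure_translation_subtract)
  then obtain a b where ab: "a \<in> frontier ?K" "b \<in> frontier ?K" "norm a = norm b"
      "norm (b - a) * norm (- b - a) = r"
    using exists_frontier_rectangle assms(4,5) by metis
  have "frontier ?K = (\<lambda>x. x - c) ` frontier K"
    using frontier_translation[of "- c" K] by (simp cong: image_cong_simp)
  then have fr: "c + y \<in> frontier K" if "y \<in> frontier ?K" for y
    using that by auto
  show ?thesis
  proof (rule has_inscribed_rectangle_of_area_diagonals[of c a K b])
    show "c - a \<in> frontier K" "c - b \<in> frontier K"
      using fr[OF neg_frontier[OF ab(1)]] fr[OF neg_frontier[OF ab(2)]] by simp_all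
  qed (use fr ab in simp_all)
qed

end
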